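(* There exists a sum game instance $\mathcal R=(\mathbf N,G,\mathcal P)$ that has no Nash-routing.
   Context: A routing game $(\mathbf N,G,\mathcal P)$: players $\{1,\dots,N\}$, a finite graph $G$, and for each player $i$ a nonempty finite set $\mathcal P_i$ of paths from a source $u_i$ to a destination $v_i$. A routing is $\mathbf p=[p_1,\dots,p_N]$, $p_i\in\mathcal P_i$. $C_e(\mathbf p)$ = number of players whose path uses edge $e$; $C_i(\mathbf p)=\max_{e\in p_i}C_e(\mathbf p)$; $D_i(\mathbf p)=|p_i|$ (number of edges). A sum game has player cost $pc_i(\mathbf p)=C_i(\mathbf p)+D_i(\mathbf p)$ (and social cost $C(\mathbf p)+D(\mathbf p)$, where $C=\max_eC_e$, $D=\max_i|p_i|$). A Nash-routing is a routing $\mathbf p$ with $pc_i(\mathbf p)\le pc_i(p_i';\mathbf p_{-i})$ for every player $i$ and every $p_i'\in\mathcal P_i$, where $(p_i';\mathbf p_{-i})$ replaces $p_i$ by $p_i'$. *)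

theory Defs
  imports Main
begin

definition graph :: "nat set set \<Rightarrow> bool" where
  "graph G \<longleftrightarrow> finite G \<and> (\<forall>e\<in>G. card e = 2)"

definition path_edges :: "nat list \<Rightarrow> nat set set" where
  "path_edges xs = {{xs ! k, xs ! Suc k} | k. Suc k < length xs}"

definition path_len :: "nat list \<Rightarrow> nat" where
  "path_len xs = length xs - 1"

definition is_path :: "nat set set \<Rightarrow> nat \<Rightarrow> nat \<Rightarrow> nat list \<Rightarrow> bool" where
  "is_path G u v xs \<longleftrightarrow> xs \<noteq> [] \<and> hd xs = u \<and> last xs = v \<and> distinct xs \<and>
     (\<forall>k. Suc k < length xs \<longrightarrow> {xs ! k, xs ! Suc k} \<in> G)"

definition routing_game ::
  "nat \<Rightarrow> nat set set \<Rightarrow> (nat \<Rightarrow> nat) \<Rightarrow> (nat \<Rightarrow> nat) \<Rightarrow> (nat \<Rightarrow> nat list set) \<Rightarrow> bool" where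
  "routing_game N G u v P \<longleftrightarrow> graph G \<and>
     (\<forall>i\<in>{1..N}. P i \<noteq> {} \<and> finite (P i) \<and> (\<forall>p\<in>P i. is_path G (u i) (v i) p))"

definition is_routing :: "nat \<Rightarrow> (nat \<Rightarrow> nat list set) \<Rightarrow> (nat \<Rightarrow> nat list) \<Rightarrow> bool" where
  "is_routing N P r \<longleftrightarrow> (\<forall>i\<in>{1..N}. r i \<in> P i)"

definition edge_cong :: "nat \<Rightarrow> (nat \<Rightarrow> nat list) \<Rightarrow> nat set \<Rightarrow> nat" where
  "edge_cong N r e = card {i\<in>{1..N}. e \<in> path_edges (r i)}"

definition player_cong :: "nat \<Rightarrow> (nat \<Rightarrow> nat list) \<Rightarrow> nat \<Rightarrow> nat" where
  "player_cong N r i = Max (insert 0 (edge_cong N r ` path_edges (r i)))"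

definition sum_cost :: "nat \<Rightarrow> (nat \<Rightarrow> nat list) \<Rightarrow> nat \<Rightarrow> nat" where
  "sum_cost N r i = player_cong N r i + path_len (r i)"

definition nash_routing_sum :: "nat \<Rightarrow> (nat \<Rightarrow> nat list set) \<Rightarrow> (nat \<Rightarrow> nat list) \<Rightarrow> bool" where
  "nash_routing_sum N P r \<longleftrightarrow> is_routing N P r \<and>
     (\<forall>i\<in>{1..N}. \<forall>p\<in>P i. sum_cost N r i \<le> sum_cost N (r(i := p)) i)"

end

theory Submission
  imports Defs
begin

(*
  Players 4..16 each have a single
  path and only serve as fixed "background load" on three edges.  Players
  1, 2, 3 each choose between a short and a long path.  Computing the
  costs in closed form shows:
    - players 2 and 3 strictly prefer their short path exactly when
      player 1 is on its long path, and their long path otherwise;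
    - if players 2 and 3 are both on their long paths, player 1 strictly
      prefers its long path; if both are short, its short path.
  Hence in any routing some player has a profitable deviation.
*)

lemma path_edges_single [simp]: "path_edges [a] = {}"
  by (simp add: path_edges_def)

lemma path_edges_Cons2 [simp]:
  "path_edges (a # b # xs) = insert {a, b} (path_edges (b # xs))"
proof (rule set_eqI)
  fix e
  have "e \<in> path_edges (a # b # xs) \<longleftrightarrow>
        (\<exists>k < Suc (length xs). e = {(a # b # xs) ! k, (a # b # xs) ! Suc k})"
    by (auto simp: path_edges_def)
  also have "\<dots> \<longleftrightarrow> e = {a, b} \<or> (\<exists>k < length xs. e = {(b # xs) ! k, (b # xs) ! Suc k})"
    by (simp only: Ex_less_Suc2) simp
  also have "\<dots> \<longleftrightarrow> e \<in> insert {a, b} (path_edges (b # xs))"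
    by (auto simp: path_edges_def)
  finally show "e \<in> path_edges (a # b # xs) \<longleftrightarrow> e \<in> insert {a, b} (path_edges (b # xs))" .
qed

lemma finite_path_edges: "finite (path_edges xs)"
proof -
  have "path_edges xs = (\<lambda>k. {xs ! k, xs ! Suc k}) ` {k. Suc k < length xs}"
    by (auto simp: path_edges_def)
  moreover have "finite {k. Suc k < length xs}"
    by (rule finite_subset[of _ "{..<length xs}"]) auto
  ultimately show ?thesis by simp
qed

lemma card_path_edge:
  assumes "distinct xs" and "e \<in> path_edges xs"
  shows "card e = 2"
proof -
  obtain k where e: "e = {xs ! k, xs ! Suc k}" and k: "Suc k < length xs"
    using assms(2) by (auto simp: path_edges_def)
  have "xs ! k \<noteq> xs ! Suc k"
    using assms(1) k by (simp add: nth_eq_iff_index_eq)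
  then show ?thesis using e by simp
qed

lemma is_path_of_edges:
  assumes "xs \<noteq> []" and "distinct xs" and "path_edges xs \<subseteq> G"
  shows "is_path G (hd xs) (last xs) xs"
  using assms unfolding is_path_def path_edges_def by blast

text \<open>Counting the players \<open>1..n\<close> with a property, as a sum over an explicit list;
  this turns congestion into a computable expression.\<close>
lemma card_players_sum_list:
  "card {j \<in> {1..n}. Q j} = (\<Sum>j\<leftarrow>[1..<Suc n]. if Q j then 1 else 0)"
proof -
  have "card {j \<in> {1..n}. Q j} = (\<Sum>j\<in>{1..n}. if Q j then 1 else 0)"
    by (simp add: sum.inter_filter[symmetric])
  also have "\<dots> = (\<Sum>j\<in>set [1..<Suc n]. if Q j then 1 else 0)"
    by (simp only: set_upt atLeastLessThanSuc_atLeastAtMost)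
  also have "\<dots> = (\<Sum>j\<leftarrow>[1..<Suc n]. if Q j then 1 else 0)"
    by (simp add: sum_list_distinct_conv_sum_set)
  finally show ?thesis .
qed

lemma sum_cost_cong:
  assumes "\<forall>j\<in>{1..N}. r j = r' j" and "i \<in> {1..N}"
  shows "sum_cost N r i = sum_cost N r' i"
proof -
  have "edge_cong N r = edge_cong N r'"
    using assms(1) unfolding edge_cong_def by (intro ext arg_cong[where f = card]) auto
  then show ?thesis
    using assms unfolding sum_cost_def player_cong_def by simp
qed

lemma nash_routing_sum_cong:
  assumes "\<forall>j\<in>{1..N}. r j = r' j" and "nash_routing_sum N P r"
  shows "nash_routing_sum N P r'"
proof -
  have "sum_cost N (r(i := p)) i = sum_cost N (r'(i := p)) i" if "i \<in> {1..N}" for i p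
    using assms(1) that by (intro sum_cost_cong) auto
  moreover have "sum_cost N r i = sum_cost N r' i" if "i \<in> {1..N}" for i
    using assms(1) that by (rule sum_cost_cong)
  ultimately show ?thesis
    using assms unfolding nash_routing_sum_def is_routing_def by auto
qed

section \<open>The instance\<close>

text \<open>The edges \<open>{0,1}\<close>, \<open>{2,3}\<close>,
  \<open>{4,5}\<close>, \<open>{6,7}\<close> and \<open>{8,9}\<close> are shared; all other edges are private.\<close>
definition short1 :: "nat list" where "short1 = [10,8,9,6,7,11]"
definition long1  :: "nat list" where "long1 = [10,0,1,20,2,3,21,4,5,22,11]"
definition short2 :: "nat list" where "short2 = [12,2,3,23,4,5,24,6,7,13]"
definition long2  :: "nat list" where "long2 = [12,0,1,25,26,27,28,29,30,31,32,33,34,35,13]"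
definition short3 :: "nat list" where "short3 = [14,0,1,36,4,5,37,6,7,15]"
definition long3  :: "nat list" where "long3 = [14,2,3,38,39,40,41,42,43,44,45,46,47,48,15]"

lemmas strategy_defs = short1_def long1_def short2_def long2_def short3_def long3_def

text \<open>Background load: one player on \<open>{4,5}\<close>, five on \<open>{6,7}\<close>, seven on \<open>{8,9}\<close>.\<close>
definition background :: "nat \<Rightarrow> nat list" where
  "background j = (if j = 4 then [4,5] else if j \<le> 9 then [6,7] else [8,9])"

definition profile :: "nat list \<Rightarrow> nat list \<Rightarrow> nat list \<Rightarrow> nat \<Rightarrow> nat list" where
  "profile a b c j = (if j = 1 then a else if j = 2 then b else if j = 3 then c else background j)"

definition strategies :: "nat \<Rightarrow> nat list set" where
  "strategies j = (if j = 1 then {short1, long1} else if j = 2 then {short2, long2}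
                   else if j = 3 then {short3, long3} else {background j})"

text \<open>Sources and destinations are read off the (common) endpoints of each
  player's strategies.\<close>
definition source :: "nat \<Rightarrow> nat" where "source j = hd (profile short1 short2 short3 j)"
definition target :: "nat \<Rightarrow> nat" where "target j = last (profile short1 short2 short3 j)"

definition all_paths :: "nat list set" where
  "all_paths = {short1, long1, short2, long2, short3, long3, [4,5], [6,7], [8,9]}"

definition gadget :: "nat set set" where "gadget = \<Union> (path_edges ` all_paths)"

lemma strategies_subset: "strategies j \<subseteq> all_paths"
  by (auto simp: strategies_def all_paths_def background_def)

lemma game: "routing_game 16 gadget source target strategies"
  unfolding routing_game_def graph_def
proof (intro conjI ballI)
  have paths_ok: "p \<noteq> [] \<and> distinct p" if "p \<in> all_paths" for p
    using that by (auto simp: all_paths_def strategy_defs)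
  show "finite gadget"
    by (simp add: gadget_def all_paths_def finite_path_edges)
  show "card e = 2" if "e \<in> gadget" for e
    using that paths_ok card_path_edge by (auto simp: gadget_def)
  fix i p assume i: "i \<in> {1..16::nat}"
  show "strategies i \<noteq> {}" "finite (strategies i)"
    by (auto simp: strategies_def)
  assume p: "p \<in> strategies i"
  then have "p \<in> all_paths" using strategies_subset by blast
  then have "is_path gadget (hd p) (last p) p"
    using paths_ok by (intro is_path_of_edges) (auto simp: gadget_def)
  moreover have "hd p = source i" "last p = target i"
    using i p by (auto simp: strategies_def source_def target_def profile_def strategy_defs
                        split: if_splits)
  ultimately show "is_path gadget (source i) (target i) p" by simp
qed

section \<open>Costs of the strategic players\<close>

lemma edge_cong_profile:
  "edge_cong 16 (profile a b c) e =
     (if e \<in> path_edges a then 1 else 0) + (if e \<in> path_edges b then 1 else 0)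
     + (if e \<in> path_edges c then 1 else 0)
     + (if e = {4,5} then 1 else 0) + (if e = {6,7} then 5 else 0) + (if e = {8,9} then 7 else 0)"
  unfolding edge_cong_def card_players_sum_list
  by (simp add: profile_def background_def upt_rec)

lemma strategy_edges:
  "path_edges short1 = {{10,8},{8,9},{9,6},{6,7},{7,11}}"
  "path_edges long1 = {{10,0},{0,1},{1,20},{20,2},{2,3},{3,21},{21,4},{4,5},{5,22},{22,11}}"
  "path_edges short2 = {{12,2},{2,3},{3,23},{23,4},{4,5},{5,24},{24,6},{6,7},{7,13}}"
  "path_edges long2 = {{12,0},{0,1},{1,25},{25,26},{26,27},{27,28},{28,29},{29,30},{30,31},
                       {31,32},{32,33},{33,34},{34,35},{35,13}}"
  "path_edges short3 = {{14,0},{0,1},{1,36},{36,4},{4,5},{5,37},{37,6},{6,7},{7,15}}"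
  "path_edges long3 = {{14,2},{2,3},{3,38},{38,39},{39,40},{40,41},{41,42},{42,43},{43,44},
                       {44,45},{45,46},{46,47},{47,48},{48,15}}"
  by (simp_all add: strategy_defs)

lemma strategy_lengths:
  "path_len short1 = 5" "path_len long1 = 10" "path_len short2 = 9"
  "path_len long2 = 14" "path_len short3 = 9" "path_len long3 = 14"
  by (simp_all add: strategy_defs path_len_def)

lemma strategies_differ:
  "short1 \<noteq> long1" "short2 \<noteq> long2" "short3 \<noteq> long3"
  "long1 \<noteq> short1" "long2 \<noteq> short2" "long3 \<noteq> short3"
  by (simp_all add: strategy_defs)

lemmas cost_simps = sum_cost_def player_cong_def profile_def edge_cong_profile strategy_edges strategy_lengths
  strategies_differ doubleton_eq_iff

lemma cost_player1:
  assumes "b \<in> {short2, long2}" and "c \<in> {short3, long3}"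
  shows "sum_cost 16 (profile short1 b c) 1 = 13"
    and "sum_cost 16 (profile long1 b c) 1 =
           12 + (if b = short2 then 1 else 0) + (if c = short3 then 1 else 0)"
  using assms by (elim insertE emptyE; simp add: cost_simps)+

lemma cost_player2:
  assumes "a \<in> {short1, long1}" and "c \<in> {short3, long3}"
  shows "sum_cost 16 (profile a short2 c) 2 =
           15 + (if a = short1 then 1 else 0) + (if c = short3 then 1 else 0)"
    and "sum_cost 16 (profile a long2 c) 2 =
           15 + (if a = long1 then 1 else 0) + (if c = short3 then 1 else 0)"
  using assms by (elim insertE emptyE; simp add: cost_simps)+

lemma cost_player3:
  assumes "a \<in> {short1, long1}" and "b \<in> {short2, long2}"
  shows "sum_cost 16 (profile a b short3) 3 =
           15 + (if a = short1 then 1 else 0) + (if b = short2 then 1 else 0)"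
    and "sum_cost 16 (profile a b long3) 3 =
           15 + (if a = long1 then 1 else 0) + (if b = short2 then 1 else 0)"
  using assms by (elim insertE emptyE; simp add: cost_simps)+

section \<open>No Nash-routing\<close>

lemma profile_update:
  "(profile a b c)(1 := p) = profile p b c"
  "(profile a b c)(2 := p) = profile a p c"
  "(profile a b c)(3 := p) = profile a b p"
  by (auto simp: profile_def fun_eq_iff)

text \<open>Every routing of the instance coincides on the players with the profile
  given by its three strategic choices, since the background players have no choice.\<close>
lemma routing_is_profile:
  assumes "is_routing 16 strategies r"
  shows "\<forall>j\<in>{1..16}. r j = profile (r 1) (r 2) (r 3) j"
  using assms by (auto simp: is_routing_def profile_def strategies_def)

lemma nash_profile_best_responses:
  assumes "nash_routing_sum 16 strategies (profile a b c)"
  shows "a \<in> {short1, long1}" "b \<in> {short2, long2}" "c \<in> {short3, long3}"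
    and "\<And>p. p \<in> {short1, long1} \<Longrightarrow>
           sum_cost 16 (profile a b c) 1 \<le> sum_cost 16 (profile p b c) 1"
    and "\<And>p. p \<in> {short2, long2} \<Longrightarrow>
           sum_cost 16 (profile a b c) 2 \<le> sum_cost 16 (profile a p c) 2"
    and "\<And>p. p \<in> {short3, long3} \<Longrightarrow>
           sum_cost 16 (profile a b c) 3 \<le> sum_cost 16 (profile a b p) 3"
proof -
  have routing: "\<forall>i\<in>{1..16}. profile a b c i \<in> strategies i"
    and stable: "\<forall>i\<in>{1..16}. \<forall>p\<in>strategies i.
                   sum_cost 16 (profile a b c) i \<le> sum_cost 16 ((profile a b c)(i := p)) i"
    using assms unfolding nash_routing_sum_def is_routing_def by auto
  show "a \<in> {short1, long1}" "b \<in> {short2, long2}" "c \<in> {short3, long3}"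
    using routing[rule_format, of 1] routing[rule_format, of 2] routing[rule_format, of 3]
    by (simp_all add: profile_def strategies_def)
  show "sum_cost 16 (profile a b c) 1 \<le> sum_cost 16 (profile p b c) 1"
    if "p \<in> {short1, long1}" for p
    using stable[rule_format, of 1 p] that unfolding profile_update by (simp add: strategies_def)
  show "sum_cost 16 (profile a b c) 2 \<le> sum_cost 16 (profile a p c) 2"
    if "p \<in> {short2, long2}" for p
    using stable[rule_format, of 2 p] that unfolding profile_update by (simp add: strategies_def)
  show "sum_cost 16 (profile a b c) 3 \<le> sum_cost 16 (profile a b p) 3"
    if "p \<in> {short3, long3}" for p
    using stable[rule_format, of 3 p] that unfolding profile_update by (simp add: strategies_def)
qed

text \<open>The core argument: players 2 and 3 answer player 1's choice with the
  opposite kind of path, and that in turn makes player 1 switch.\<close>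
lemma profile_not_nash: "\<not> nash_routing_sum 16 strategies (profile a b c)"
proof
  assume nash: "nash_routing_sum 16 strategies (profile a b c)"
  note a = nash_profile_best_responses(1)[OF nash]
    and b = nash_profile_best_responses(2)[OF nash]
    and c = nash_profile_best_responses(3)[OF nash]
    and best1 = nash_profile_best_responses(4)[OF nash]
    and best2 = nash_profile_best_responses(5)[OF nash]
    and best3 = nash_profile_best_responses(6)[OF nash]
  note costs = cost_player1[OF b c] cost_player2[OF a c] cost_player3[OF a b] strategies_differ
  show False
  proof (cases "a = short1")
    case True
    (* players 2 and 3 pay one less on their long paths, and then player 1
       pays 12 on its long path against 13 on its short one *)
    have "b = long2"
      using b best2[of long2] costs True by auto
    moreover have "c = long3"
      using c best3[of long3] costs True by auto
    ultimately show False
      using best1[of long1] costs True by auto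
  next
    case False
    (* players 2 and 3 pay one less on their short paths, and then player 1
       pays 14 on its long path against 13 on its short one *)
    then have "a = long1" using a by simp
    moreover from this have "b = short2"
      using b best2[of short2] costs by auto
    moreover from \<open>a = long1\<close> have "c = short3"
      using c best3[of short3] costs by auto
    ultimately show False
      using best1[of short1] costs by auto
  qed
qed

lemma no_nash: "\<not> nash_routing_sum 16 strategies r"
proof
  assume nash: "nash_routing_sum 16 strategies r"
  then have "\<forall>j\<in>{1..16}. r j = profile (r 1) (r 2) (r 3) j"
    by (intro routing_is_profile) (simp add: nash_routing_sum_def)
  then have "nash_routing_sum 16 strategies (profile (r 1) (r 2) (r 3))"
    using nash by (rule nash_routing_sum_cong)
  then show False by (simp add: profile_not_nash)
qed

theorem mainTheorem8:
  shows "\<exists>N G u v P. N \<ge> 1 \<and> routing_game N G u v P \<and> \<not> (\<exists>r. nash_routing_sum N P r)"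
proof (intro exI conjI)
  show "(1::nat) \<le> 16" by simp
  show "routing_game 16 gadget source target strategies" by (rule game)
  show "\<not> (\<exists>r. nash_routing_sum 16 strategies r)" using no_nash by blast
qed

end
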